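(* Let $N>2$ be an odd positive integer with smallest prime factor $p$, and let $K\ge N$ be an integer. Let $a_2,a_1\in\mathbb{Z}_N$ with $\gcd(a_2,N)=1$, and let $f:\mathbb{Z}_N\to\mathbb{Z}_K$ be defined by $f(x)=\phi(a_2x^2+a_1x)$, where $\phi:\mathbb{Z}_N\to\mathbb{Z}_K$ sends the class of $y\in\{0,\dots,N-1\}$ to the class of $y$ modulo $K$. For $0\le k<N$ let $\mathbf{a}_k=(a_k(0),\dots,a_k(K-1))$ with $a_k(t)=\omega_K^{tf(k)}$. Let $\mathbf{h}_0,\dots,\mathbf{h}_{N-1}$ be unimodular complex sequences of length $N$ such that for all $0\le i\ne j<N$ and all $0\le v<N$, $$\Big|\sum_{n=0}^{N-1}h_i(n)h_j^*(n)\Big|\le 1,\qquad \Big|\sum_{n=0}^{N-1}h_i(n)h_j^*(n)\omega_N^{nv}\Big|<N.$$ For $0\le i<N$ define $\mathbf{s}_i$ of length $NK$ by $s_i(tN+k)=h_i(k)a_k(t)$ ($0\le t<K$, $0\le k<N$) and let $\mathcal{S}=\{\mathbf{s}_0,\dots,\mathbf{s}_{N-1}\}$. Then $\mathcal{S}$ is a periodic $(N,NK,\Pi,K)$-LAZ sequence set, where (1) $\Pi=(-p,p)\times(-N,N)$ if $K=N$; (2) $\Pi=(-p,p)\times(-K+N-1,K-N+1)$ if $N<K<2N-1$; (3) $\Pi=(-p,p)\times(-K,K)$ if $K\ge 2N-1$.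
   Context: $\omega_L=e^{2\pi\sqrt{-1}/L}$, $z^*$ is complex conjugation, unimodular means all entries have modulus 1. For sequences $\mathbf{a},\mathbf{b}$ of length $L$, the periodic cross-ambiguity function is $AF_{\mathbf{a},\mathbf{b}}(\tau,v)=\sum_{t=0}^{L-1}a(t)b^*(\langle t+\tau\rangle_L)\omega_L^{vt}$ ($\langle\cdot\rangle_L$ = reduction mod $L$), $AF_{\mathbf{a}}=AF_{\mathbf{a},\mathbf{a}}$. A set of $M$ sequences of length $L$ is an $(M,L,\Pi,\theta)$-LAZ periodic sequence set if $|AF_{\mathbf{a}}(\tau,v)|\le\theta$ for all sequences $\mathbf{a}$ in the set and all integer $(0,0)\ne(\tau,v)\in\Pi$, and $|AF_{\mathbf{a},\mathbf{b}}(\tau,v)|\le\theta$ for all distinct $\mathbf{a},\mathbf{b}$ in the set and all integer $(\tau,v)\in\Pi$. *)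

theory Defs
  imports Complex_Main "HOL-Computational_Algebra.Primes"
begin

definition omega :: "nat \<Rightarrow> complex" where
  "omega L = exp (2 * of_real pi * \<i> / of_nat L)"

text \<open>Periodic cross-ambiguity function of sequences of length L (sequences are
  functions nat => complex, only the values at 0..L-1 matter).\<close>
definition AF :: "nat \<Rightarrow> (nat \<Rightarrow> complex) \<Rightarrow> (nat \<Rightarrow> complex) \<Rightarrow> int \<Rightarrow> int \<Rightarrow> complex" where
  "AF L a b \<tau> v = (\<Sum>t<L. a t * cnj (b (nat ((int t + \<tau>) mod int L))) * omega L powi (v * int t))"

definition LAZ_set :: "nat \<Rightarrow> nat \<Rightarrow> (int \<times> int) set \<Rightarrow> real \<Rightarrow> (nat \<Rightarrow> nat \<Rightarrow> complex) \<Rightarrow> bool" where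
  "LAZ_set M L Pi \<theta> s \<longleftrightarrow>
     (\<forall>i<M. \<forall>\<tau> v. (\<tau>, v) \<in> Pi \<and> (\<tau>, v) \<noteq> (0, 0) \<longrightarrow> cmod (AF L (s i) (s i) \<tau> v) \<le> \<theta>) \<and>
     (\<forall>i<M. \<forall>j<M. i \<noteq> j \<longrightarrow> (\<forall>\<tau> v. (\<tau>, v) \<in> Pi \<longrightarrow> cmod (AF L (s i) (s j) \<tau> v) \<le> \<theta>))"

definition box_region :: "int \<Rightarrow> int \<Rightarrow> (int \<times> int) set" where
  "box_region A B = {(\<tau>, v). - A < \<tau> \<and> \<tau> < A \<and> - B < v \<and> v < B}"

end

theory Submission
  imports Defs "HOL-Analysis.Complex_Transcendental" "HOL-Number_Theory.Cong"
begin

(* Index a sample of length N K as t N + k, with period t < K and phase k < N. A delay \<tau> sends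
   phase k to k + \<tau> mod N, so the sum over the K periods is a geometric sum of K-th roots of
   unity: AF is K times a sum of unimodular terms over the resonant phases k, those for which K
   divides f(k) - f(k + \<tau>) + v. For 0 < |\<tau>| < p the delay is a unit mod N, and
   f(k) - f(k + \<tau>) = -(2 a2 \<tau> k + const) mod N is injective in k; on the given Doppler window a
   resonance determines this difference mod N, so at most one phase resonates and |AF| \<le> K.
   For \<tau> = 0 no phase resonates unless v = 0, where AF is K times the correlation of h_i and h_j. *)

lemma omega_nonzero [simp]: "omega L \<noteq> 0"
  by (simp add: omega_def)

lemma norm_omega_powi [simp]: "cmod (omega L powi n) = 1"
  by (simp add: omega_def norm_power_int norm_exp_eq_Re)

lemma cnj_omega_powi: "cnj (omega L powi n) = omega L powi (- n)"
proof -
  have "cnj (omega L) = inverse (omega L)"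
    by (simp add: omega_def exp_cnj exp_minus[symmetric])
  then show ?thesis
    by (simp add: power_int_minus power_int_inverse)
qed

lemma omega_powi_add: "omega L powi (m + n) = omega L powi m * omega L powi n"
  by (simp add: power_int_add)

lemma omega_power_eq_1_iff:
  assumes "L > 0"
  shows "omega L ^ n = 1 \<longleftrightarrow> L dvd n"
proof -
  have "omega L ^ n = exp (2 * of_real pi * \<i> * of_nat n / of_nat L)"
    by (simp add: omega_def exp_of_nat_mult[symmetric] mult_ac)
  then show ?thesis
    using complex_root_unity_eq_1[of L n] assms by simp
qed

lemma omega_powi_eq_1_iff:
  assumes "L > 0"
  shows "omega L powi n = 1 \<longleftrightarrow> int L dvd n"
proof (cases n rule: int_cases2)
  case (nonneg m)
  then show ?thesis using omega_power_eq_1_iff[OF assms] by simp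
next
  case (nonpos m)
  then show ?thesis using omega_power_eq_1_iff[OF assms] by (simp add: power_int_minus)
qed

lemma omega_powi_cong:
  assumes "L > 0" and "[m = n] (mod int L)"
  shows "omega L powi m = omega L powi n"
proof -
  have "omega L powi (m - n) = 1"
    using assms by (simp add: omega_powi_eq_1_iff cong_iff_dvd_diff)
  then show ?thesis
    by (simp add: power_int_diff)
qed

lemma omega_mult_powi:
  assumes "N > 0"
  shows "omega (N * K) powi (int N * n) = omega K powi n"
proof -
  have "omega (N * K) ^ N = omega K"
    using assms by (simp add: omega_def exp_of_nat_mult[symmetric])
  then show ?thesis
    by (simp add: power_int_mult)
qed

lemma sum_omega_powi:
  assumes "K > 0"
  shows "(\<Sum>t<K. omega K powi (int t * d)) = (if int K dvd d then of_nat K else 0)"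
proof -
  define z where "z = omega K powi d"
  have powers: "omega K powi (int t * d) = z ^ t" for t
    by (simp add: z_def power_int_mult mult.commute[of "int t"])
  show ?thesis
  proof (cases "int K dvd d")
    case True
    then have "z = 1"
      using assms by (simp add: z_def omega_powi_eq_1_iff)
    then show ?thesis
      using True by (simp add: powers)
  next
    case False
    then have "z \<noteq> 1"
      using assms by (simp add: z_def omega_powi_eq_1_iff)
    moreover have "z ^ K = 1"
      using assms by (simp add: z_def power_int_power' omega_powi_eq_1_iff)
    ultimately show ?thesis
      using False geometric_sum[of z K] by (simp add: powers)
  qed
qed

lemma sum_lessThan_mult_split:
  fixes N K :: nat
  shows "(\<Sum>m<N * K. g m) = (\<Sum>t<K. \<Sum>k<N. g (t * N + k))"
proof -
  have "(\<Sum>m<K * N. g m) = (\<Sum>t<K. \<Sum>m\<in>{t * N..<t * N + N}. g m)"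
    using sum.nat_group[of g N K] by simp
  also have "\<dots> = (\<Sum>t<K. \<Sum>k<N. g (t * N + k))"
    by (simp add: sum.atLeastLessThan_shift_0 atLeast0LessThan)
  finally show ?thesis
    by (simp add: mult.commute)
qed

lemma interleaved_index_shift:
  fixes \<tau> :: int
  assumes N: "N > 0" and K: "K > 0" and "k < N"
  shows "nat ((int (t * N + k) + \<tau>) mod int (N * K))
           = nat ((int t + (int k + \<tau>) div int N) mod int K) * N + nat ((int k + \<tau>) mod int N)"
proof -
  define m where "m = int (t * N + k) + \<tau>"
  have "m = (int k + \<tau>) + int t * int N"
    by (simp add: m_def)
  then have "m div int N = int t + (int k + \<tau>) div int N" "m mod int N = (int k + \<tau>) mod int N"
    using N by simp_all
  moreover have "m mod int (N * K) = int N * (m div int N mod int K) + m mod int N"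
    using mod_mult2_eq'[of m N K] by simp
  ultimately show ?thesis
    using N K by (simp add: m_def nat_add_distrib nat_mult_distrib mult.commute)
qed

lemma AF_interleaved:
  fixes a b x y :: "nat \<Rightarrow> complex" and f :: "nat \<Rightarrow> nat" and \<tau> v :: int
  assumes N: "N > 0" and K: "K > 0"
    and a: "\<And>t k. t < K \<Longrightarrow> k < N \<Longrightarrow> a (t * N + k) = x k * omega K ^ (t * f k)"
    and b: "\<And>t k. t < K \<Longrightarrow> k < N \<Longrightarrow> b (t * N + k) = y k * omega K ^ (t * f k)"
  defines "r \<equiv> \<lambda>k. nat ((int k + \<tau>) mod int N)" and "q \<equiv> \<lambda>k. (int k + \<tau>) div int N"
  defines "c \<equiv> \<lambda>k. x k * cnj (y (r k)) * omega (N * K) powi (v * int k)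
                   * omega K powi (- q k * int (f (r k)))"
  shows "AF (N * K) a b \<tau> v
           = of_nat K * (\<Sum>k | k < N \<and> int K dvd int (f k) - int (f (r k)) + v. c k)"
proof -
  define D where "D k = int (f k) - int (f (r k)) + v" for k
  have summand: "a (t * N + k) * cnj (b (nat ((int (t * N + k) + \<tau>) mod int (N * K))))
                   * omega (N * K) powi (v * int (t * N + k))
                 = c k * omega K powi (int t * D k)" if "t < K" "k < N" for t k
  proof -
    define T where "T = nat ((int t + q k) mod int K)"
    have "T < K" "r k < N"
      using N K by (simp_all add: T_def r_def nat_less_iff)
    have "[int T * int (f (r k)) = (int t + q k) * int (f (r k))] (mod int K)"
      using K by (intro cong_mult cong_refl) (simp add: T_def)
    then have "b (T * N + r k) = y (r k) * omega K powi ((int t + q k) * int (f (r k)))"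
      using b[OF \<open>T < K\<close> \<open>r k < N\<close>] omega_powi_cong[OF K] by (simp flip: power_int_of_nat)
    then have b_val: "b (nat ((int (t * N + k) + \<tau>) mod int (N * K)))
                        = y (r k) * omega K powi ((int t + q k) * int (f (r k)))"
      using interleaved_index_shift[OF N K \<open>k < N\<close>] by (simp add: T_def r_def q_def)
    have a_val: "a (t * N + k) = x k * omega K powi (int t * int (f k))"
      by (simp add: a[OF that] flip: of_nat_mult)
    have "v * int (t * N + k) = int N * (v * int t) + v * int k"
      by (simp add: algebra_simps)
    then have omega_val: "omega (N * K) powi (v * int (t * N + k))
                            = omega K powi (v * int t) * omega (N * K) powi (v * int k)"
      by (simp only: omega_powi_add omega_mult_powi[OF N])
    have "a (t * N + k) * cnj (b (nat ((int (t * N + k) + \<tau>) mod int (N * K))))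
            * omega (N * K) powi (v * int (t * N + k))
          = x k * cnj (y (r k)) * omega (N * K) powi (v * int k)
            * (omega K powi (int t * int (f k)) * omega K powi (- ((int t + q k) * int (f (r k))))
               * omega K powi (v * int t))"
      unfolding a_val b_val omega_val by (simp add: cnj_omega_powi mult_ac del: complex_cnj_power_int)
    also have "omega K powi (int t * int (f k)) * omega K powi (- ((int t + q k) * int (f (r k))))
                 * omega K powi (v * int t)
               = omega K powi (- q k * int (f (r k))) * omega K powi (int t * D k)"
      by (simp add: D_def algebra_simps flip: omega_powi_add)
    finally show ?thesis
      by (simp add: c_def mult_ac)
  qed
  have "AF (N * K) a b \<tau> v = (\<Sum>t<K. \<Sum>k<N. c k * omega K powi (int t * D k))"
    unfolding AF_def sum_lessThan_mult_split by (intro sum.cong refl) (rule summand; simp)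
  also have "\<dots> = (\<Sum>k<N. c k * (\<Sum>t<K. omega K powi (int t * D k)))"
    by (simp add: sum.swap[of _ "{..<K}"] sum_distrib_left)
  also have "\<dots> = (\<Sum>k<N. if int K dvd D k then c k * of_nat K else 0)"
    by (intro sum.cong refl) (simp add: sum_omega_powi[OF K])
  also have "\<dots> = (\<Sum>k | k < N \<and> int K dvd D k. c k) * of_nat K"
    by (simp add: sum.inter_filter[symmetric] sum_distrib_right Collect_conj_eq lessThan_def)
  finally show ?thesis
    by (simp add: D_def mult.commute)
qed

lemma AF_interleaved_zero_shift:
  fixes a b x y :: "nat \<Rightarrow> complex" and f :: "nat \<Rightarrow> nat" and v :: int
  assumes N: "N > 0" and K: "K > 0"
    and a: "\<And>t k. t < K \<Longrightarrow> k < N \<Longrightarrow> a (t * N + k) = x k * omega K ^ (t * f k)"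
    and b: "\<And>t k. t < K \<Longrightarrow> k < N \<Longrightarrow> b (t * N + k) = y k * omega K ^ (t * f k)"
  shows "AF (N * K) a b 0 v = (if int K dvd v
           then of_nat K * (\<Sum>k<N. x k * cnj (y k) * omega (N * K) powi (v * int k)) else 0)"
proof -
  have unshifted: "nat (int k mod int N) = k" "int k div int N = 0" if "k < N" for k
    using that by (simp_all flip: of_nat_mod of_nat_div)
  have "{k. k < N \<and> int K dvd int (f k) - int (f (nat (int k mod int N))) + v}
          = (if int K dvd v then {..<N} else {})"
    by (auto simp: unshifted)
  moreover have "(\<Sum>k<N. x k * cnj (y (nat (int k mod int N))) * omega (N * K) powi (v * int k)
                     * omega K powi (- (int k div int N) * int (f (nat (int k mod int N)))))
                 = (\<Sum>k<N. x k * cnj (y k) * omega (N * K) powi (v * int k))"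
    by (intro sum.cong refl) (simp add: unshifted)
  ultimately show ?thesis
    using AF_interleaved[OF N K a b, of 0 v] by simp
qed

lemma norm_AF_interleaved_le:
  fixes a b x y :: "nat \<Rightarrow> complex" and f :: "nat \<Rightarrow> nat" and \<tau> v :: int
  assumes N: "N > 0" and K: "K > 0"
    and a: "\<And>t k. t < K \<Longrightarrow> k < N \<Longrightarrow> a (t * N + k) = x k * omega K ^ (t * f k)"
    and b: "\<And>t k. t < K \<Longrightarrow> k < N \<Longrightarrow> b (t * N + k) = y k * omega K ^ (t * f k)"
    and x: "\<And>k. k < N \<Longrightarrow> cmod (x k) \<le> 1" and y: "\<And>k. k < N \<Longrightarrow> cmod (y k) \<le> 1"
  shows "cmod (AF (N * K) a b \<tau> v) \<le> real K
           * card {k. k < N \<and> int K dvd int (f k) - int (f (nat ((int k + \<tau>) mod int N))) + v}"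
    (is "_ \<le> _ * real (card ?S)")
proof -
  define r where "r k = nat ((int k + \<tau>) mod int N)" for k
  define c where "c k = x k * cnj (y (r k)) * omega (N * K) powi (v * int k)
                          * omega K powi (- ((int k + \<tau>) div int N) * int (f (r k)))" for k
  have c_bound: "cmod (c k) \<le> 1" if "k \<in> ?S" for k
  proof -
    have "r k < N"
      using N by (simp add: r_def nat_less_iff)
    then show ?thesis
      using that x y by (simp add: c_def norm_mult mult_le_one)
  qed
  have "cmod (AF (N * K) a b \<tau> v) = real K * cmod (\<Sum>k\<in>?S. c k)"
    using AF_interleaved[OF N K a b, of \<tau> v] by (simp add: r_def c_def norm_mult)
  also have "\<dots> \<le> real K * (\<Sum>k\<in>?S. cmod (c k))"
    by (intro mult_left_mono norm_sum) simp
  also have "\<dots> \<le> real K * real (card ?S)"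
    using sum_bounded_above[of ?S "\<lambda>k. cmod (c k)" 1] c_bound by (intro mult_left_mono) simp_all
  finally show ?thesis .
qed

lemma coprime_if_abs_less_least_prime_factor:
  fixes \<tau> :: int and N p :: nat
  assumes "N > 0" and "\<tau> \<noteq> 0" and "\<bar>\<tau>\<bar> < int p"
    and p_min: "\<And>q. prime q \<Longrightarrow> q dvd N \<Longrightarrow> p \<le> q"
  shows "coprime \<tau> (int N)"
proof (rule ccontr)
  assume "\<not> coprime \<tau> (int N)"
  then have "gcd (nat \<bar>\<tau>\<bar>) N \<noteq> 1"
    by (metis coprime_iff_gcd_eq_1 coprime_nat_abs_left_iff)
  then obtain q where q: "prime q" "q dvd gcd (nat \<bar>\<tau>\<bar>) N"
    using prime_factor_nat by blast
  have "q dvd nat \<bar>\<tau>\<bar>" "q dvd N"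
    using q(2) by (metis dvd_trans gcd_dvd1, metis dvd_trans gcd_dvd2)
  then have "q \<le> nat \<bar>\<tau>\<bar>"
    using \<open>\<tau> \<noteq> 0\<close> by (intro dvd_imp_le) auto
  moreover have "p \<le> q"
    using q(1) \<open>q dvd N\<close> by (rule p_min)
  ultimately show False
    using \<open>\<bar>\<tau>\<bar> < int p\<close> by linarith
qed

lemma cong_of_common_resonance:
  fixes x1 x2 v :: int and N K :: nat
  assumes x1: "\<bar>x1\<bar> < int N" and x2: "\<bar>x2\<bar> < int N"
    and dvd1: "int K dvd x1 + v" and dvd2: "int K dvd x2 + v"
    and window: "K = N \<or> 2 * N - 1 \<le> K \<or> \<bar>v\<bar> \<le> int K - int N"
  shows "[x1 = x2] (mod int N)"
proof -
  have zero: "z = 0" if "int K dvd z" "\<bar>z\<bar> < int K" for z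
    using dvd_imp_le_int[of z "int K"] that by force
  have diff: "int K dvd x1 - x2"
    using dvd_diff[OF dvd1 dvd2] by simp
  from window consider "K = N" | "2 * N - 1 \<le> K" | "\<bar>v\<bar> \<le> int K - int N"
    by blast
  then show ?thesis
  proof cases
    case 1
    then show ?thesis
      using diff by (simp add: cong_iff_dvd_diff)
  next
    case 2
    then have "x1 - x2 = 0"
      using x1 x2 diff by (intro zero) auto
    then show ?thesis
      by simp
  next
    case 3
    have "x1 + v = 0" "x2 + v = 0"
      using 3 x1 x2 dvd1 dvd2 by (auto intro: zero)
    then have "x1 = x2"
      by linarith
    then show ?thesis
      by simp
  qed
qed

lemma quadratic_phase_eq:
  fixes a2 a1 :: int and f :: "nat \<Rightarrow> nat"
  assumes "N > 0" and "N \<le> K"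
    and f_def: "\<And>x. x < N \<Longrightarrow> f x = nat ((a2 * int x ^ 2 + a1 * int x) mod int N) mod K"
    and "z < N"
  shows "int (f z) = (a2 * int z ^ 2 + a1 * int z) mod int N"
proof -
  have "nat ((a2 * int z ^ 2 + a1 * int z) mod int N) < N"
    using assms(1) by (simp add: nat_less_iff)
  then have "nat ((a2 * int z ^ 2 + a1 * int z) mod int N) < K"
    using assms(2) by linarith
  then show ?thesis
    using assms(1) f_def[OF \<open>z < N\<close>] by simp
qed

lemma quadratic_phase_shift_cong:
  fixes a2 a1 \<tau> :: int and f :: "nat \<Rightarrow> nat"
  assumes N: "N > 0" and "N \<le> K"
    and f_def: "\<And>x. x < N \<Longrightarrow> f x = nat ((a2 * int x ^ 2 + a1 * int x) mod int N) mod K"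
    and "k < N"
  shows "[int (f k) - int (f (nat ((int k + \<tau>) mod int N)))
            = - (2 * a2 * \<tau> * int k + (a2 * \<tau> ^ 2 + a1 * \<tau>))] (mod int N)"
proof -
  define g where "g z = a2 * z ^ 2 + a1 * z" for z :: int
  define r where "r = nat ((int k + \<tau>) mod int N)"
  have "r < N" and r_cong: "[int r = int k + \<tau>] (mod int N)"
    using N by (simp_all add: r_def nat_less_iff)
  have "[g (int r) = g (int k + \<tau>)] (mod int N)"
    unfolding g_def by (intro cong_add cong_mult cong_pow cong_refl r_cong)
  then have "[int (f k) - int (f r) = g (int k) - g (int k + \<tau>)] (mod int N)"
    using quadratic_phase_eq[OF N \<open>N \<le> K\<close> f_def] \<open>k < N\<close> \<open>r < N\<close>
    by (intro cong_diff) (simp_all add: g_def cong_sym)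
  also have "g (int k) - g (int k + \<tau>) = - (2 * a2 * \<tau> * int k + (a2 * \<tau> ^ 2 + a1 * \<tau>))"
    by (simp add: g_def algebra_simps power2_eq_square)
  finally show ?thesis
    by (simp add: r_def)
qed

lemma card_resonances_le_1:
  fixes a2 a1 \<tau> v :: int and f :: "nat \<Rightarrow> nat"
  assumes "odd N" and "N \<le> K" and a2: "coprime a2 (int N)" and \<tau>: "coprime \<tau> (int N)"
    and f_def: "\<And>x. x < N \<Longrightarrow> f x = nat ((a2 * int x ^ 2 + a1 * int x) mod int N) mod K"
    and window: "K = N \<or> 2 * N - 1 \<le> K \<or> \<bar>v\<bar> \<le> int K - int N"
  shows "card {k. k < N \<and> int K dvd int (f k) - int (f (nat ((int k + \<tau>) mod int N))) + v} \<le> 1"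
proof -
  have N: "N > 0"
    using \<open>odd N\<close> by (simp add: odd_pos)
  define e where "e k = int (f k) - int (f (nat ((int k + \<tau>) mod int N)))" for k
  have f_bound: "int (f z) < int N" if "z < N" for z
    using quadratic_phase_eq[OF N \<open>N \<le> K\<close> f_def that] N by simp
  have e_bound: "\<bar>e k\<bar> < int N" if "k < N" for k
  proof -
    have "nat ((int k + \<tau>) mod int N) < N"
      using N by (simp add: nat_less_iff)
    then show ?thesis
      using f_bound[OF that] f_bound[of "nat ((int k + \<tau>) mod int N)"] by (simp add: e_def)
  qed
  have "k1 = k2" if "k1 < N" "k2 < N" "int K dvd e k1 + v" "int K dvd e k2 + v" for k1 k2
  proof -
    define C where "C = a2 * \<tau> ^ 2 + a1 * \<tau>"
    have "[e k1 = e k2] (mod int N)"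
      using that e_bound window by (intro cong_of_common_resonance) auto
    moreover have "[e k = - (2 * a2 * \<tau> * int k + C)] (mod int N)" if "k < N" for k
      unfolding e_def C_def by (rule quadratic_phase_shift_cong[OF N \<open>N \<le> K\<close> f_def that])
    ultimately have "[- (2 * a2 * \<tau> * int k1 + C) = - (2 * a2 * \<tau> * int k2 + C)] (mod int N)"
      using that(1,2) by (meson cong_sym cong_trans)
    then have "[2 * a2 * \<tau> * int k1 = 2 * a2 * \<tau> * int k2] (mod int N)"
      by (simp only: cong_minus_minus_iff cong_add_rcancel)
    moreover have "coprime (2 * a2 * \<tau>) (int N)"
      using \<open>odd N\<close> a2 \<tau> by simp
    ultimately have "[int k1 = int k2] (mod int N)"
      by (simp add: cong_mult_lcancel)
    then show ?thesis
      using that(1,2) by (simp add: cong_int_iff cong_less_imp_eq_nat)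
  qed
  then show ?thesis
    by (auto simp: card_le_Suc0_iff_eq e_def)
qed

lemma norm_AF_quadratic_interleaved_le:
  fixes N K p :: nat and a2 a1 \<tau> v :: int and f :: "nat \<Rightarrow> nat" and a b x y :: "nat \<Rightarrow> complex"
  assumes "odd N" and "N \<le> K"
    and p_min: "\<And>q. prime q \<Longrightarrow> q dvd N \<Longrightarrow> p \<le> q"
    and a2: "coprime a2 (int N)"
    and f_def: "\<And>x. x < N \<Longrightarrow> f x = nat ((a2 * int x ^ 2 + a1 * int x) mod int N) mod K"
    and a: "\<And>t k. t < K \<Longrightarrow> k < N \<Longrightarrow> a (t * N + k) = x k * omega K ^ (t * f k)"
    and b: "\<And>t k. t < K \<Longrightarrow> k < N \<Longrightarrow> b (t * N + k) = y k * omega K ^ (t * f k)"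
    and x: "\<And>k. k < N \<Longrightarrow> cmod (x k) = 1" and y: "\<And>k. k < N \<Longrightarrow> cmod (y k) = 1"
    and \<tau>: "\<bar>\<tau>\<bar> < int p" and v: "\<bar>v\<bar> < int K"
    and window: "K = N \<or> 2 * N - 1 \<le> K \<or> \<bar>v\<bar> \<le> int K - int N"
    and unshifted: "(\<tau>, v) = (0, 0) \<Longrightarrow> cmod (\<Sum>k<N. x k * cnj (y k)) \<le> 1"
  shows "cmod (AF (N * K) a b \<tau> v) \<le> real K"
proof -
  have N: "N > 0"
    using \<open>odd N\<close> by (simp add: odd_pos)
  then have K: "K > 0"
    using \<open>N \<le> K\<close> by linarith
  show ?thesis
  proof (cases "\<tau> = 0")
    case False
    then have "coprime \<tau> (int N)"
      using N \<tau> p_min by (intro coprime_if_abs_less_least_prime_factor)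
    note card = card_resonances_le_1[OF \<open>odd N\<close> \<open>N \<le> K\<close> a2 this f_def window]
    have "cmod (AF (N * K) a b \<tau> v) \<le> real K
            * card {k. k < N \<and> int K dvd int (f k) - int (f (nat ((int k + \<tau>) mod int N))) + v}"
      by (rule norm_AF_interleaved_le[OF N K a b]) (simp_all add: x y)
    also have "\<dots> \<le> real K * 1"
      using card by (intro mult_left_mono) simp_all
    finally show ?thesis
      by simp
  next
    case True
    note AF_eq = AF_interleaved_zero_shift[OF N K a b, of v]
    show ?thesis
    proof (cases "v = 0")
      case True
      then have "cmod (AF (N * K) a b \<tau> v) = real K * cmod (\<Sum>k<N. x k * cnj (y k))"
        using \<open>\<tau> = 0\<close> AF_eq by (simp add: norm_mult)
      also have "\<dots> \<le> real K * 1"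
        using \<open>\<tau> = 0\<close> True unshifted by (intro mult_left_mono) simp_all
      finally show ?thesis
        by simp
    next
      case False
      then have "\<not> int K dvd v"
        using v by (auto dest: dvd_imp_le_int)
      then show ?thesis
        using \<open>\<tau> = 0\<close> AF_eq by simp
    qed
  qed
qed

lemma LAZ_set_box_regionI:
  assumes "\<And>i j \<tau> v. i < M \<Longrightarrow> j < M \<Longrightarrow> \<bar>\<tau>\<bar> < A \<Longrightarrow> \<bar>v\<bar> < B
             \<Longrightarrow> (\<tau>, v) \<noteq> (0, 0) \<or> i \<noteq> j \<Longrightarrow> cmod (AF L (s i) (s j) \<tau> v) \<le> \<theta>"
  shows "LAZ_set M L (box_region A B) \<theta> s"
  unfolding LAZ_set_def box_region_def using assms by (auto simp: abs_less_iff)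

theorem corollary1:
  fixes N K p :: nat and a2 a1 :: int
    and f :: "nat \<Rightarrow> nat"
    and h :: "nat \<Rightarrow> nat \<Rightarrow> complex"
    and s :: "nat \<Rightarrow> nat \<Rightarrow> complex"
  assumes N_gt: "N > 2" and N_odd: "odd N"
    and p_prime: "prime p" and p_dvd: "p dvd N"
    and p_min: "\<forall>q. prime q \<and> q dvd N \<longrightarrow> p \<le> q"
    and K_ge: "K \<ge> N"
    and a2_range: "0 \<le> a2 \<and> a2 < int N" and a1_range: "0 \<le> a1 \<and> a1 < int N"
    and a2_coprime: "coprime a2 (int N)"
    and f_def: "\<forall>x<N. f x = nat ((a2 * int x ^ 2 + a1 * int x) mod int N) mod K"
    and h_unimod: "\<forall>i<N. \<forall>n<N. cmod (h i n) = 1"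
    and h_corr: "\<forall>i<N. \<forall>j<N. i \<noteq> j \<longrightarrow>
                   cmod (\<Sum>n<N. h i n * cnj (h j n)) \<le> 1"
    and h_dopp: "\<forall>i<N. \<forall>j<N. i \<noteq> j \<longrightarrow> (\<forall>v<N.
                   cmod (\<Sum>n<N. h i n * cnj (h j n) * omega N ^ (n * v)) < real N)"
    and s_def: "\<forall>i<N. \<forall>t<K. \<forall>k<N. s i (t * N + k) = h i k * omega K ^ (t * f k)"
  shows "(K = N \<longrightarrow> LAZ_set N (N * K) (box_region (int p) (int N)) (real K) s)
       \<and> (N < K \<and> K < 2 * N - 1 \<longrightarrow>
            LAZ_set N (N * K) (box_region (int p) (int K - int N + 1)) (real K) s)
       \<and> (K \<ge> 2 * N - 1 \<longrightarrow> LAZ_set N (N * K) (box_region (int p) (int K)) (real K) s)"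
proof -
  have bound: "cmod (AF (N * K) (s i) (s j) \<tau> v) \<le> real K"
    if "i < N" "j < N" "\<bar>\<tau>\<bar> < int p" "\<bar>v\<bar> < int K"
      "K = N \<or> 2 * N - 1 \<le> K \<or> \<bar>v\<bar> \<le> int K - int N" "(\<tau>, v) \<noteq> (0, 0) \<or> i \<noteq> j"
    for i j \<tau> v
    by (rule norm_AF_quadratic_interleaved_le[OF N_odd K_ge _ a2_coprime, where x = "h i" and y = "h j"])
      (use that p_min f_def h_unimod h_corr s_def in auto)
  show ?thesis
    by (intro conjI impI LAZ_set_box_regionI bound) auto
qed

end
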